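(* Let $\mathfrak{g}=\widehat{\mathfrak{sl}}_2$, let $\Lambda=w_1\Lambda_1+w_2\Lambda_2$ with $w_1,w_2\in\mathbb{Z}_{\ge0}$, and let $\mathcal{C}$ be a categorical module over $\mathfrak{g}$ whose support equals the support of $V(\Lambda)$. Let $\mu=\Lambda-b_1\alpha_1-b_2\alpha_2$ be a dominant weight in this support, and let $k^\pm_{12}$ be as defined below. Then: (a) if $b_2=n<b_1$, or if $b_1=b_2=n+1$ and $w_1=0$, then $(k^-_{12},k^+_{12})=(n,n)$; (b) if $b_1=b_2=n$ with $w_1\neq0$ and $w_2\neq0$, then $(k^-_{12},k^+_{12})=(n,n-1)$; (c) if $b_1=n<b_2$, or if $b_1=b_2=n+1$ and $w_2=0$, then $(k^-_{12},k^+_{12})=(n+1,n-1)$. In particular the possible pairs $(k^-_{12},k^+_{12})$ are exactly of the forms $(n,n)$, $(n,n-1)$, $(n+1,n-1)$.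
   Context: For $\widehat{\mathfrak{sl}}_2$: simple roots $\alpha_1=\epsilon_1-\epsilon_2$ and $\alpha_2=\epsilon_2-\epsilon_1+\delta$ (the affine node), $\delta=\alpha_1+\alpha_2$; $\Lambda_1,\Lambda_2$ are fundamental weights, $\alpha_j^\vee(\Lambda_i)=\delta_{ij}$. The positive real roots are $\alpha_{12;n}=\alpha_1+n\delta$ ($n\ge0$) and $\alpha_{21;n}=-\alpha_1+n\delta$ ($n\ge1$). A categorical module is a representation of the Khovanov–Lauda–Rouquier 2-category (abelian categories $\mathcal{C}_\lambda$ with exact functors $\mathcal{E}_i,\mathcal{F}_i$ shifting weights by $\pm\alpha_i$, etc.); its support is $\{\lambda:\mathcal{C}_\lambda\neq0\}$. $N_\mu=\{\alpha\text{ positive real root}:\mathcal{C}_{\mu+\alpha}\neq0\}$. Define $k^+_{12}=\max(\{-1\}\cup\{n:\alpha_{12;n}\in N_\mu\})$ and $k^-_{12}=k^+_{21}=\max(\{0\}\cup\{n:\alpha_{21;n}\in N_\mu\})$. *)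

theory Defs
  imports Main
begin

text \<open>Weights of affine sl2 in the coset Lambda + Q, with Lambda = w1 Lambda1 + w2 Lambda2,
  are encoded by their coordinates (b1,b2) :: int * int, standing for
  Lambda - b1 alpha1 - b2 alpha2.  Cartan matrix [[2,-2],[-2,2]].\<close>

type_synonym wt = "int \<times> int"

definition pair1 :: "nat \<Rightarrow> nat \<Rightarrow> wt \<Rightarrow> int" where
  "pair1 w1 w2 b = int w1 - 2 * fst b + 2 * snd b"

definition pair2 :: "nat \<Rightarrow> nat \<Rightarrow> wt \<Rightarrow> int" where
  "pair2 w1 w2 b = int w2 - 2 * snd b + 2 * fst b"

definition dominant :: "nat \<Rightarrow> nat \<Rightarrow> wt \<Rightarrow> bool" where
  "dominant w1 w2 b \<longleftrightarrow> pair1 w1 w2 b \<ge> 0 \<and> pair2 w1 w2 b \<ge> 0"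

text \<open>Simple reflections s_i(lambda) = lambda - alpha_i^vee(lambda) alpha_i.\<close>
definition refl1 :: "nat \<Rightarrow> nat \<Rightarrow> wt \<Rightarrow> wt" where
  "refl1 w1 w2 b = (fst b + pair1 w1 w2 b, snd b)"

definition refl2 :: "nat \<Rightarrow> nat \<Rightarrow> wt \<Rightarrow> wt" where
  "refl2 w1 w2 b = (fst b, snd b + pair2 w1 w2 b)"

inductive weyl_rel :: "nat \<Rightarrow> nat \<Rightarrow> wt \<Rightarrow> wt \<Rightarrow> bool" for w1 w2 where
  refl: "weyl_rel w1 w2 b b"
| step1: "weyl_rel w1 w2 b c \<Longrightarrow> weyl_rel w1 w2 b (refl1 w1 w2 c)"
| step2: "weyl_rel w1 w2 b c \<Longrightarrow> weyl_rel w1 w2 b (refl2 w1 w2 c)"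

text \<open>Support (set of weights) of the integrable highest weight module V(Lambda):
  for positive level, P(Lambda) = W . { lambda dominant, lambda \<le> Lambda }  (Kac, Prop. 12.6);
  for Lambda = 0, V(0) is the trivial module with the single weight 0.\<close>
definition suppV :: "nat \<Rightarrow> nat \<Rightarrow> wt set" where
  "suppV w1 w2 = (if w1 = 0 \<and> w2 = 0 then {(0, 0)} else {b. \<exists>c. weyl_rel w1 w2 b c \<and> dominant w1 w2 c \<and> fst c \<ge> 0 \<and> snd c \<ge> 0})"

text \<open>Positive real roots: A12 n = alpha1 + n delta (n \<ge> 0), A21 n = -alpha1 + n delta (n \<ge> 1).\<close>
datatype posroot = A12 nat | A21 nat

definition pos_real_roots :: "posroot set" where
  "pos_real_roots = range A12 \<union> {A21 n | n. n \<ge> 1}"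

text \<open>Coordinates (c1,c2) of a root as c1 alpha1 + c2 alpha2 (delta = alpha1 + alpha2).\<close>
fun root_coords :: "posroot \<Rightarrow> wt" where
  "root_coords (A12 n) = (int n + 1, int n)"
| "root_coords (A21 n) = (int n - 1, int n)"

text \<open>mu + alpha in coordinates (mu = Lambda - b1 alpha1 - b2 alpha2).\<close>
definition add_root :: "wt \<Rightarrow> posroot \<Rightarrow> wt" where
  "add_root b a = (fst b - fst (root_coords a), snd b - snd (root_coords a))"

definition N_set :: "wt set \<Rightarrow> wt \<Rightarrow> posroot set" where
  "N_set S mu = {a \<in> pos_real_roots. add_root mu a \<in> S}"

definition kplus12 :: "wt set \<Rightarrow> wt \<Rightarrow> int" where
  "kplus12 S mu = Max ({-1} \<union> {int n | n. A12 n \<in> N_set S mu})"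

definition kminus12 :: "wt set \<Rightarrow> wt \<Rightarrow> int" where
  "kminus12 S mu = Max ({0} \<union> {int n | n. A21 n \<in> N_set S mu})"

end

theory Submission
  imports Defs
begin

(* Two quantities are invariant under the affine Weyl group W acting on the weights
   Lambda - b1 alpha1 - b2 alpha2 at level K = w1 + w2: the norm gap ((Lambda,Lambda) - (lambda,lambda))/2,
   and the pairing with alpha1-coroot up to sign modulo 2K (s1 negates it, s2 maps p to 2K - p).
   On dominant weights the pairing lies in [0, K], so both invariants together pin down the weight:
   every orbit meets the dominant chamber at most once, and lambda is a weight of V(Lambda) iff the
   dominant weight of its orbit is at most Lambda.  For dominant mu, the weight mu + alpha with
   alpha = alpha1 + n delta or -alpha1 + n delta has alpha1-pairing shifted by exactly +-2, so at most
   two simple reflections make it dominant.  This gives closed forms for k+ and k- in terms of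
   (b1, b2, w1, w2), from which every case of the proposition is read off. *)

definition cong_pm :: "int \<Rightarrow> int \<Rightarrow> int \<Rightarrow> bool" where
  "cong_pm k p r \<longleftrightarrow> k dvd p - r \<or> k dvd p + r"

lemma cong_pm_refl: "cong_pm k p p"
  by (simp add: cong_pm_def)

lemma cong_pm_uminus:
  assumes "cong_pm k p r"
  shows "cong_pm k (- p) r"
proof -
  have "- p - r = - (p + r)" "- p + r = - (p - r)"
    by simp_all
  then show ?thesis
    using assms unfolding cong_pm_def by (simp only: dvd_minus_iff) blast
qed

lemma cong_pm_diff_left:
  assumes "cong_pm k p r"
  shows "cong_pm k (k - p) r"
proof -
  have "k - p - r = k - (p + r)" "k - p + r = k - (p - r)"
    by simp_all
  then show ?thesis
    using assms unfolding cong_pm_def by (simp only: dvd_diff_right_iff dvd_refl) blast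
qed

lemma cong_pm_trans_sym:
  assumes "cong_pm k p r" and "cong_pm k q r"
  shows "cong_pm k p q"
proof -
  have "p - q = (p - r) - (q - r)" "p + q = (p - r) + (q + r)"
    and "p + q = (p + r) + (q - r)" "p - q = (p + r) - (q + r)"
    by simp_all
  then show ?thesis
    using assms unfolding cong_pm_def by (metis dvd_add dvd_diff)
qed

lemma cong_pm_double_imp_eq:
  fixes k u v :: int
  assumes "0 \<le> u" "u \<le> k" "0 \<le> v" "v \<le> k" and "cong_pm (2 * k) u v"
  shows "u = v"
  using assms(5) unfolding cong_pm_def
proof
  assume "2 * k dvd u - v"
  then show "u = v"
    using dvd_imp_le_int[of "u - v" "2 * k"] assms(1-4) by fastforce
next
  assume "2 * k dvd u + v"
  then have "\<not> (0 < u + v \<and> u + v < 2 * k)"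
    using zdvd_not_zless by blast
  then show "u = v"
    using assms(1-4) by linarith
qed

lemma Max_insert_int_interval:
  fixes lo hi :: int
  assumes "0 \<le> lo" and "lo - 1 \<le> hi"
  shows "Max ({lo - 1} \<union> {int n | n. lo \<le> int n \<and> int n \<le> hi}) = hi"
proof -
  have "x \<in> {int n | n. lo \<le> int n \<and> int n \<le> hi}" if "lo \<le> x" "x \<le> hi" for x
    using that assms(1) by (intro CollectI exI[of _ "nat x"]) auto
  then have "{lo - 1} \<union> {int n | n. lo \<le> int n \<and> int n \<le> hi} = {lo - 1..hi}"
    using assms by fastforce
  moreover have "Max {lo - 1..hi} = hi"
    using assms(2) by (intro Max_eqI) auto
  ultimately show ?thesis
    by simp
qed

lemma ex_nat_pair_shape:
  fixes km kp :: int
  assumes "kp \<le> km" "km \<le> kp + 2" "0 \<le> km" "km = kp + 2 \<Longrightarrow> 1 \<le> km"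
  shows "\<exists>n::nat. (km, kp) \<in> {(int n, int n), (int n, int n - 1), (int n + 1, int n - 1)}"
proof -
  consider "km = kp" | "km = kp + 1" | "km = kp + 2"
    using assms(1,2) by linarith
  then show ?thesis
  proof cases
    case 1
    then show ?thesis
      using assms(3) by (intro exI[of _ "nat km"]) simp
  next
    case 2
    then show ?thesis
      using assms(3) by (intro exI[of _ "nat km"]) simp
  next
    case 3
    then show ?thesis
      using assms(4) by (intro exI[of _ "nat (km - 1)"]) simp
  qed
qed

definition norm_gap :: "nat \<Rightarrow> nat \<Rightarrow> wt \<Rightarrow> int" where
  "norm_gap w1 w2 b = int w1 * fst b + int w2 * snd b - (fst b - snd b)^2"

lemma pair1_add_pair2: "pair1 w1 w2 b + pair2 w1 w2 b = int w1 + int w2"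
  by (simp add: pair1_def pair2_def)

lemma norm_gap_refl1 [simp]: "norm_gap w1 w2 (refl1 w1 w2 b) = norm_gap w1 w2 b"
  by (simp add: norm_gap_def refl1_def pair1_def power2_eq_square algebra_simps)

lemma norm_gap_refl2 [simp]: "norm_gap w1 w2 (refl2 w1 w2 b) = norm_gap w1 w2 b"
  by (simp add: norm_gap_def refl2_def pair2_def power2_eq_square algebra_simps)

lemma pair1_refl1 [simp]: "pair1 w1 w2 (refl1 w1 w2 b) = - pair1 w1 w2 b"
  by (simp add: refl1_def pair1_def)

lemma pair1_refl2 [simp]: "pair1 w1 w2 (refl2 w1 w2 b) = 2 * (int w1 + int w2) - pair1 w1 w2 b"
  by (simp add: refl2_def pair1_def pair2_def)

lemma weyl_rel_norm_gap: "weyl_rel w1 w2 b c \<Longrightarrow> norm_gap w1 w2 c = norm_gap w1 w2 b"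
  by (induction rule: weyl_rel.induct) simp_all

lemma weyl_rel_pair1_cong_pm:
  "weyl_rel w1 w2 b c \<Longrightarrow> cong_pm (2 * (int w1 + int w2)) (pair1 w1 w2 c) (pair1 w1 w2 b)"
  by (induction rule: weyl_rel.induct) (simp_all add: cong_pm_refl cong_pm_uminus cong_pm_diff_left)

lemma eq_if_pair1_norm_gap_eq:
  assumes "0 < w1 + w2"
    and "pair1 w1 w2 c = pair1 w1 w2 c'" and "norm_gap w1 w2 c = norm_gap w1 w2 c'"
  shows "c = c'"
proof -
  define d where "d = fst c - snd c"
  have diff: "fst c' - snd c' = d"
    using assms(2) by (simp add: pair1_def d_def)
  have "norm_gap w1 w2 x = (int w1 + int w2) * snd x + int w1 * d - d^2"
    if "fst x - snd x = d" for x
    using that by (simp add: norm_gap_def algebra_simps flip: that)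
  then have "(int w1 + int w2) * snd c = (int w1 + int w2) * snd c'"
    using assms(3) diff d_def by simp
  then have "snd c = snd c'"
    using assms(1) by simp
  then show ?thesis
    using diff d_def by (simp add: prod_eq_iff)
qed

lemma dominant_unique_in_orbit:
  assumes "0 < w1 + w2"
    and "weyl_rel w1 w2 b c" "dominant w1 w2 c"
    and "weyl_rel w1 w2 b c'" "dominant w1 w2 c'"
  shows "c = c'"
proof -
  let ?K = "int w1 + int w2"
  have "cong_pm (2 * ?K) (pair1 w1 w2 c) (pair1 w1 w2 c')"
    using assms(2,4) by (blast intro: cong_pm_trans_sym weyl_rel_pair1_cong_pm)
  then have "pair1 w1 w2 c = pair1 w1 w2 c'"
    using assms(3,5) pair1_add_pair2[of w1 w2 c] pair1_add_pair2[of w1 w2 c']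
    by (intro cong_pm_double_imp_eq[where k = ?K]) (auto simp: dominant_def)
  moreover have "norm_gap w1 w2 c = norm_gap w1 w2 c'"
    using weyl_rel_norm_gap[OF assms(2)] weyl_rel_norm_gap[OF assms(4)] by simp
  ultimately show ?thesis
    by (rule eq_if_pair1_norm_gap_eq[OF assms(1)])
qed

lemma suppV_trivial: "suppV 0 0 = {(0, 0)}"
  by (simp add: suppV_def)

lemma pos_level_if_mem_suppV:
  assumes "b \<in> suppV w1 w2" and "b \<noteq> (0, 0)"
  shows "0 < w1 + w2"
  using assms suppV_trivial by (cases "w1 + w2 = 0") auto

lemma mem_suppV_iff_dominant_in_orbit:
  assumes "0 < w1 + w2" and "weyl_rel w1 w2 b c" and "dominant w1 w2 c"
  shows "b \<in> suppV w1 w2 \<longleftrightarrow> 0 \<le> fst c \<and> 0 \<le> snd c"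
proof -
  have "suppV w1 w2 = {b. \<exists>c. weyl_rel w1 w2 b c \<and> dominant w1 w2 c \<and> 0 \<le> fst c \<and> 0 \<le> snd c}"
    using assms(1) by (auto simp: suppV_def)
  then show ?thesis
    using dominant_unique_in_orbit[OF assms(1,2,3)] assms(2,3) by blast
qed

lemma mem_suppV_iff_dominant:
  assumes "0 < w1 + w2" and "dominant w1 w2 b"
  shows "b \<in> suppV w1 w2 \<longleftrightarrow> 0 \<le> fst b \<and> 0 \<le> snd b"
  using mem_suppV_iff_dominant_in_orbit[OF assms(1) weyl_rel.refl assms(2)] .

lemma nonneg_if_dominant_mem_suppV:
  assumes "dominant w1 w2 b" and "b \<in> suppV w1 w2"
  shows "0 \<le> fst b \<and> 0 \<le> snd b"
proof (cases "w1 + w2 = 0")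
  case True
  then show ?thesis
    using assms(2) suppV_trivial by auto
next
  case False
  then show ?thesis
    using mem_suppV_iff_dominant[of w1 w2 b] assms by simp
qed

lemma mem_suppV_iff_pair2_eq_neg1:
  assumes "0 < w1 + w2" and "pair2 w1 w2 (x, y) = -1"
  shows "(x, y) \<in> suppV w1 w2 \<longleftrightarrow> 0 \<le> x \<and> 1 \<le> y"
proof -
  have rel: "weyl_rel w1 w2 (x, y) (x, y - 1)"
    using weyl_rel.step2[OF weyl_rel.refl, of w1 w2 "(x, y)"] assms(2) by (simp add: refl2_def)
  have dom: "dominant w1 w2 (x, y - 1)"
    using assms by (auto simp: dominant_def pair1_def pair2_def)
  show ?thesis
    using mem_suppV_iff_dominant_in_orbit[OF assms(1) rel dom] by auto
qed

lemma mem_suppV_iff_pair2_eq_neg2: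
  assumes "0 < w1 + w2" and "pair2 w1 w2 (x, y) = -2"
  shows "(x, y) \<in> suppV w1 w2 \<longleftrightarrow> of_bool (w1 + w2 = 1) \<le> x \<and> 2 \<le> y"
proof (cases "w1 + w2 = 1")
  case True
  then have "int w1 + int w2 = 1"
    by linarith
  then have "refl1 w1 w2 (refl2 w1 w2 (x, y)) = (x - 1, y - 2)"
    using assms(2) by (simp add: refl1_def refl2_def pair1_def pair2_def)
  then have rel: "weyl_rel w1 w2 (x, y) (x - 1, y - 2)"
    using weyl_rel.step1[OF weyl_rel.step2[OF weyl_rel.refl, of w1 w2 "(x, y)"]] by simp
  have dom: "dominant w1 w2 (x - 1, y - 2)"
    using assms True by (auto simp: dominant_def pair1_def pair2_def)
  show ?thesis
    using mem_suppV_iff_dominant_in_orbit[OF assms(1) rel dom] True by auto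
next
  case False
  have rel: "weyl_rel w1 w2 (x, y) (x, y - 2)"
    using weyl_rel.step2[OF weyl_rel.refl, of w1 w2 "(x, y)"] assms(2) by (simp add: refl2_def)
  have dom: "dominant w1 w2 (x, y - 2)"
    using assms False by (auto simp: dominant_def pair1_def pair2_def)
  show ?thesis
    using mem_suppV_iff_dominant_in_orbit[OF assms(1) rel dom] False by auto
qed

lemma mem_suppV_iff_pair1_eq_neg1:
  assumes "0 < w1 + w2" and "pair1 w1 w2 (x, y) = -1"
  shows "(x, y) \<in> suppV w1 w2 \<longleftrightarrow> 1 \<le> x \<and> 0 \<le> y"
proof -
  have rel: "weyl_rel w1 w2 (x, y) (x - 1, y)"
    using weyl_rel.step1[OF weyl_rel.refl, of w1 w2 "(x, y)"] assms(2) by (simp add: refl1_def)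
  have dom: "dominant w1 w2 (x - 1, y)"
    using assms by (auto simp: dominant_def pair1_def pair2_def)
  show ?thesis
    using mem_suppV_iff_dominant_in_orbit[OF assms(1) rel dom] by auto
qed

lemma mem_suppV_iff_pair1_eq_neg2:
  assumes "0 < w1 + w2" and "pair1 w1 w2 (x, y) = -2"
  shows "(x, y) \<in> suppV w1 w2 \<longleftrightarrow> 2 \<le> x \<and> of_bool (w1 + w2 = 1) \<le> y"
proof (cases "w1 + w2 = 1")
  case True
  then have "int w1 + int w2 = 1"
    by linarith
  then have "refl2 w1 w2 (refl1 w1 w2 (x, y)) = (x - 2, y - 1)"
    using assms(2) by (simp add: refl1_def refl2_def pair1_def pair2_def)
  then have rel: "weyl_rel w1 w2 (x, y) (x - 2, y - 1)"
    using weyl_rel.step2[OF weyl_rel.step1[OF weyl_rel.refl, of w1 w2 "(x, y)"]] by simp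
  have dom: "dominant w1 w2 (x - 2, y - 1)"
    using assms True by (auto simp: dominant_def pair1_def pair2_def)
  show ?thesis
    using mem_suppV_iff_dominant_in_orbit[OF assms(1) rel dom] True by auto
next
  case False
  have rel: "weyl_rel w1 w2 (x, y) (x - 2, y)"
    using weyl_rel.step1[OF weyl_rel.refl, of w1 w2 "(x, y)"] assms(2) by (simp add: refl1_def)
  have dom: "dominant w1 w2 (x - 2, y)"
    using assms False by (auto simp: dominant_def pair1_def pair2_def)
  show ?thesis
    using mem_suppV_iff_dominant_in_orbit[OF assms(1) rel dom] False by auto
qed

lemma N_set_trivial: "N_set {(0, 0)} (0, 0) = {}"
  by (auto simp: N_set_def add_root_def pos_real_roots_def)

lemma A12_mem_N_set_suppV_iff:
  assumes "0 < w1 + w2" and "dominant w1 w2 (b1, b2)"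
  shows "A12 n \<in> N_set (suppV w1 w2) (b1, b2) \<longleftrightarrow>
    int n \<le> (if b1 = b2 \<and> b1 \<noteq> 0 \<and> w2 = 0 then b1 - 2 else min (b1 - 1) b2)"
proof -
  let ?x = "b1 - int n - 1" and ?y = "b2 - int n"
  have mem: "A12 n \<in> N_set (suppV w1 w2) (b1, b2) \<longleftrightarrow> (?x, ?y) \<in> suppV w1 w2"
    by (simp add: N_set_def pos_real_roots_def add_root_def algebra_simps)
  have X: "0 \<le> int w1 - 2 * b1 + 2 * b2" "int w1 - 2 * b1 + 2 * b2 \<le> int w1 + int w2"
    using assms(2) by (auto simp: dominant_def pair1_def pair2_def)
  consider "int w1 - 2 * b1 + 2 * b2 + 2 \<le> int w1 + int w2"
    | "pair2 w1 w2 (?x, ?y) = -1" | "pair2 w1 w2 (?x, ?y) = -2"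
    using X by (fastforce simp: pair2_def)
  then show ?thesis
  proof cases
    case 1
    then have "dominant w1 w2 (?x, ?y)"
      using X by (auto simp: dominant_def pair1_def pair2_def)
    then show ?thesis
      using mem_suppV_iff_dominant[OF assms(1)] mem 1 X by auto
  next
    case 2
    then show ?thesis
      using mem_suppV_iff_pair2_eq_neg1[OF assms(1) 2] mem X by (auto simp: pair2_def)
  next
    case 3
    then show ?thesis
      using mem_suppV_iff_pair2_eq_neg2[OF assms(1) 3] mem X by (auto simp: pair2_def)
  qed
qed

lemma A21_mem_N_set_suppV_iff:
  assumes "0 < w1 + w2" and "dominant w1 w2 (b1, b2)"
  shows "A21 n \<in> N_set (suppV w1 w2) (b1, b2) \<longleftrightarrow>
    1 \<le> n \<and> int n \<le> (if b1 = b2 \<and> b1 \<noteq> 0 \<and> w1 = 0 then b1 - 1 else min (b1 + 1) b2)"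
proof -
  let ?x = "b1 - int n + 1" and ?y = "b2 - int n"
  have mem: "A21 n \<in> N_set (suppV w1 w2) (b1, b2) \<longleftrightarrow> 1 \<le> n \<and> (?x, ?y) \<in> suppV w1 w2"
    by (auto simp: N_set_def pos_real_roots_def add_root_def algebra_simps)
  have X: "0 \<le> int w1 - 2 * b1 + 2 * b2" "int w1 - 2 * b1 + 2 * b2 \<le> int w1 + int w2"
    using assms(2) by (auto simp: dominant_def pair1_def pair2_def)
  consider "2 \<le> int w1 - 2 * b1 + 2 * b2"
    | "pair1 w1 w2 (?x, ?y) = -1" | "pair1 w1 w2 (?x, ?y) = -2"
    using X by (fastforce simp: pair1_def)
  then show ?thesis
  proof cases
    case 1
    then have "dominant w1 w2 (?x, ?y)"
      using X by (auto simp: dominant_def pair1_def pair2_def)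
    then show ?thesis
      using mem_suppV_iff_dominant[OF assms(1)] mem 1 X by auto
  next
    case 2
    then show ?thesis
      using mem_suppV_iff_pair1_eq_neg1[OF assms(1) 2] mem X by (auto simp: pair1_def)
  next
    case 3
    then show ?thesis
      using mem_suppV_iff_pair1_eq_neg2[OF assms(1) 3] mem X by (auto simp: pair1_def)
  qed
qed

lemma kplus12_suppV:
  assumes "dominant w1 w2 (b1, b2)" and "(b1, b2) \<in> suppV w1 w2"
  shows "kplus12 (suppV w1 w2) (b1, b2) =
    (if b1 = b2 \<and> b1 \<noteq> 0 \<and> w2 = 0 then b1 - 2 else min (b1 - 1) b2)"
proof (cases "w1 + w2 = 0")
  case True
  then show ?thesis
    using assms(2) by (simp add: suppV_trivial kplus12_def N_set_trivial)
next
  case False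
  let ?k = "if b1 = b2 \<and> b1 \<noteq> 0 \<and> w2 = 0 then b1 - 2 else min (b1 - 1) b2"
  have "{int n | n. A12 n \<in> N_set (suppV w1 w2) (b1, b2)} = {int n | n. 0 \<le> int n \<and> int n \<le> ?k}"
    using A12_mem_N_set_suppV_iff[OF _ assms(1)] False by simp
  moreover have "-1 \<le> ?k"
    using nonneg_if_dominant_mem_suppV[OF assms] by auto
  ultimately show ?thesis
    unfolding kplus12_def using Max_insert_int_interval[of 0 ?k] by simp
qed

lemma kminus12_suppV:
  assumes "dominant w1 w2 (b1, b2)" and "(b1, b2) \<in> suppV w1 w2"
  shows "kminus12 (suppV w1 w2) (b1, b2) =
    (if b1 = b2 \<and> b1 \<noteq> 0 \<and> w1 = 0 then b1 - 1 else min (b1 + 1) b2)"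
proof (cases "w1 + w2 = 0")
  case True
  then show ?thesis
    using assms(2) by (simp add: suppV_trivial kminus12_def N_set_trivial)
next
  case False
  let ?k = "if b1 = b2 \<and> b1 \<noteq> 0 \<and> w1 = 0 then b1 - 1 else min (b1 + 1) b2"
  have "{int n | n. A21 n \<in> N_set (suppV w1 w2) (b1, b2)} = {int n | n. 1 \<le> int n \<and> int n \<le> ?k}"
    using A21_mem_N_set_suppV_iff[OF _ assms(1)] False by simp
  moreover have "0 \<le> ?k"
    using nonneg_if_dominant_mem_suppV[OF assms] by auto
  ultimately show ?thesis
    unfolding kminus12_def using Max_insert_int_interval[of 1 ?k] by simp
qed

theorem proposition4p1:
  fixes w1 w2 :: nat and S :: "wt set" and b1 b2 :: int
  assumes supp: "S = suppV w1 w2"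
    and dom: "dominant w1 w2 (b1, b2)"
    and mem: "(b1, b2) \<in> S"
  shows "(\<forall>n::nat. (b2 = int n \<and> int n < b1) \<or> (b1 = int n + 1 \<and> b2 = int n + 1 \<and> w1 = 0)
            \<longrightarrow> (kminus12 S (b1, b2), kplus12 S (b1, b2)) = (int n, int n))
       \<and> (\<forall>n::nat. b1 = int n \<and> b2 = int n \<and> w1 \<noteq> 0 \<and> w2 \<noteq> 0
            \<longrightarrow> (kminus12 S (b1, b2), kplus12 S (b1, b2)) = (int n, int n - 1))
       \<and> (\<forall>n::nat. (b1 = int n \<and> int n < b2) \<or> (b1 = int n + 1 \<and> b2 = int n + 1 \<and> w2 = 0)
            \<longrightarrow> (kminus12 S (b1, b2), kplus12 S (b1, b2)) = (int n + 1, int n - 1))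
       \<and> (\<exists>n::nat. (kminus12 S (b1, b2), kplus12 S (b1, b2)) \<in>
            {(int n, int n), (int n, int n - 1), (int n + 1, int n - 1)})"
proof -
  have kminus: "kminus12 S (b1, b2) = (if b1 = b2 \<and> b1 \<noteq> 0 \<and> w1 = 0 then b1 - 1 else min (b1 + 1) b2)"
    using kminus12_suppV[OF dom] mem supp by simp
  have kplus: "kplus12 S (b1, b2) = (if b1 = b2 \<and> b1 \<noteq> 0 \<and> w2 = 0 then b1 - 2 else min (b1 - 1) b2)"
    using kplus12_suppV[OF dom] mem supp by simp
  have nonneg: "0 \<le> b1" "0 \<le> b2"
    using nonneg_if_dominant_mem_suppV[OF dom] mem supp by auto
  have level: "0 < w1 + w2" if "b1 \<noteq> 0"
    using pos_level_if_mem_suppV[of "(b1, b2)"] that mem supp by simp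
  have "kplus12 S (b1, b2) \<le> kminus12 S (b1, b2)" "kminus12 S (b1, b2) \<le> kplus12 S (b1, b2) + 2"
    and "0 \<le> kminus12 S (b1, b2)"
    and "kminus12 S (b1, b2) = kplus12 S (b1, b2) + 2 \<Longrightarrow> 1 \<le> kminus12 S (b1, b2)"
    unfolding kminus kplus using nonneg by auto
  then have "\<exists>n::nat. (kminus12 S (b1, b2), kplus12 S (b1, b2)) \<in>
            {(int n, int n), (int n, int n - 1), (int n + 1, int n - 1)}"
    by (rule ex_nat_pair_shape)
  then show ?thesis
    using kminus kplus level by auto
qed

end
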